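(* Let $p\geq 1$ be an integer and let $G=\langle a,t\mid ta^pt^{-1}=a^p\rangle$ be the Baumslag--Solitar group $BS(p,p)$. Every element $x\in G$ can be written uniquely as $x=w(a,t)a^N$, where $N\in\mathbb Z$ and $w(a,t)$ is a freely reduced word belonging to $\{t,at,\ldots,a^{p-1}t,\,t^{-1},at^{-1},\ldots,a^{p-1}t^{-1}\}^*$. There exists a constant $C_1>0$ such that for every $x\in G$ with this normal form $x=w(a,t)a^N$, $$C_1(|w|+|N|)\leq \|x\|\leq |w|+|N|,$$ where $|w|$ is the number of letters of $w$ as a word over $\{a^{\pm1},t^{\pm1}\}$ and $\|x\|$ is the word length of $x$ with respect to the generating set $\{a,t\}$.
   Context: $X^*$ denotes the set of finite concatenations of words from $X$. *)

theory Defs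
  imports Complex_Main
begin

text \<open>Generators of BS(p,p) = < a, t | t a^p t^-1 = a^p >.
  A letter is a generator together with a flag: False = the generator, True = its inverse.\<close>

datatype gen = GA | GT

type_synonym letter = "gen \<times> bool"

definition inv_letter :: "letter \<Rightarrow> letter" where
  "inv_letter x = (fst x, \<not> snd x)"

definition a_pow :: "int \<Rightarrow> letter list" where
  "a_pow N = (if N \<ge> 0 then replicate (nat N) (GA, False) else replicate (nat (- N)) (GA, True))"

definition relator :: "nat \<Rightarrow> letter list" where
  "relator p = [(GT, False)] @ a_pow (int p) @ [(GT, True)] @ a_pow (- int p)"

inductive bs_eq :: "nat \<Rightarrow> letter list \<Rightarrow> letter list \<Rightarrow> bool" for p where
  bs_refl: "bs_eq p u u"
| bs_sym: "bs_eq p u v \<Longrightarrow> bs_eq p v u"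
| bs_trans: "bs_eq p u v \<Longrightarrow> bs_eq p v w \<Longrightarrow> bs_eq p u w"
| bs_free: "bs_eq p (u @ [x, inv_letter x] @ v) (u @ v)"
| bs_rel: "bs_eq p (u @ relator p @ v) (u @ v)"

definition word_length :: "nat \<Rightarrow> letter list \<Rightarrow> nat" where
  "word_length p u = (LEAST n. \<exists>v. length v = n \<and> bs_eq p u v)"

definition freely_reduced :: "letter list \<Rightarrow> bool" where
  "freely_reduced xs \<longleftrightarrow> (\<forall>i. Suc i < length xs \<longrightarrow> xs ! Suc i \<noteq> inv_letter (xs ! i))"

text \<open>A word in the blocks a^i t^e (0 \<le> i \<le> p-1, e = \<plusminus>1): a block (i, s) stands for
  a^i t if s = False and a^i t^-1 if s = True.\<close>
definition block_word :: "(nat \<times> bool) list \<Rightarrow> letter list" where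
  "block_word w = concat (map (\<lambda>(i, s). replicate i (GA, False) @ [(GT, s)]) w)"

definition normal_word :: "nat \<Rightarrow> (nat \<times> bool) list \<Rightarrow> bool" where
  "normal_word p w \<longleftrightarrow> (\<forall>(i, s) \<in> set w. i < p) \<and> freely_reduced (block_word w)"

end

theory Submission
  imports Defs
begin

text \<open>Normal forms are computed by an automaton that reads a word from the left and keeps a
  state (w, N), standing for w a^N with w a normal block word. Reading a^{\<plusminus>1} changes N;
  reading t^e writes N = r + q p with 0 \<le> r < p, moves the central element a^{qp} to the right
  of t^e, and then either cancels t^e against a final block a^j t^{-e} (if r = 0) or appends the
  block a^r t^e. Each step is right multiplication by the letter, and the final state is
  invariant under free cancellation and the relator; as it reproduces w a^N for every normal
  form (w, N), normal forms exist and are unique. A step increases |w| + |N| by at most 2p, so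
  a geodesic word of length n has a normal form of size at most 2pn, giving C1 = 1/(2p).\<close>

lemma bs_eq_context: "bs_eq p u v \<Longrightarrow> bs_eq p (x @ u @ y) (x @ v @ y)"
proof (induction rule: bs_eq.induct)
  case (bs_free u c v)
  then show ?case using bs_eq.bs_free[of p "x @ u" c "v @ y"] by simp
next
  case (bs_rel u v)
  then show ?case using bs_eq.bs_rel[of p "x @ u" "v @ y"] by simp
next
  case (bs_refl u)
  show ?case by (rule bs_eq.bs_refl)
next
  case (bs_sym u v)
  then show ?case by (meson bs_eq.bs_sym)
next
  case (bs_trans u v w)
  then show ?case by (meson bs_eq.bs_trans)
qed

declare bs_trans [trans]

abbreviation letter_a :: letter where "letter_a \<equiv> (GA, False)"
abbreviation letter_a_inv :: letter where "letter_a_inv \<equiv> (GA, True)"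

lemma inv_letter_Pair [simp]: "inv_letter (g, b) = (g, \<not> b)"
  by (simp add: inv_letter_def)

lemma a_pow_of_nat: "a_pow (int n) = replicate n letter_a"
  by (simp add: a_pow_def)

lemma a_pow_uminus_of_nat: "a_pow (- int n) = replicate n letter_a_inv"
  by (simp add: a_pow_def)

lemma length_a_pow [simp]: "length (a_pow N) = nat \<bar>N\<bar>"
  by (simp add: a_pow_def)

lemma a_pow_snoc_a: "bs_eq p (a_pow N @ [letter_a]) (a_pow (N + 1))"
proof (cases "N \<ge> 0")
  case True
  then have "a_pow N @ [letter_a] = a_pow (N + 1)"
    by (simp add: a_pow_def nat_add_distrib replicate_append_same)
  then show ?thesis by (simp add: bs_refl)
next
  case False
  then obtain k where N: "N = - int (Suc k)"
    by (intro that[of "nat (- N) - 1"]) simp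
  have "a_pow N = replicate k letter_a_inv @ [letter_a_inv]" "a_pow (N + 1) = replicate k letter_a_inv"
    using a_pow_uminus_of_nat[of "Suc k"] a_pow_uminus_of_nat[of k] by (simp_all add: N replicate_append_same)
  then show ?thesis
    using bs_free[of p "replicate k letter_a_inv" letter_a_inv "[]"] by simp
qed

lemma a_pow_snoc_a_inv: "bs_eq p (a_pow N @ [letter_a_inv]) (a_pow (N - 1))"
proof (cases "N \<le> 0")
  case True
  then obtain k where N: "N = - int k"
    by (intro that[of "nat (- N)"]) simp
  have "N - 1 = - int (Suc k)"
    by (simp add: N)
  then have "a_pow (N - 1) = replicate (Suc k) letter_a_inv"
    by (simp only: a_pow_uminus_of_nat)
  then have "a_pow N @ [letter_a_inv] = a_pow (N - 1)"
    by (simp add: N a_pow_uminus_of_nat replicate_append_same)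
  then show ?thesis by (simp add: bs_refl)
next
  case False
  then obtain k where N: "N = int (Suc k)"
    by (intro that[of "nat N - 1"]) simp
  have "a_pow N = replicate k letter_a @ [letter_a]" "a_pow (N - 1) = replicate k letter_a"
    using a_pow_of_nat[of "Suc k"] a_pow_of_nat[of k] by (simp_all add: N replicate_append_same)
  then show ?thesis
    using bs_free[of p "replicate k letter_a" letter_a "[]"] by simp
qed

lemma a_pow_add: "bs_eq p (a_pow M @ a_pow N) (a_pow (M + N))"
proof (induction N rule: int_induct[where k = 0])
  case base
  then show ?case by (simp add: a_pow_def bs_refl)
next
  case (step1 N)
  have "bs_eq p (a_pow M @ a_pow (N + 1)) (a_pow M @ a_pow N @ [letter_a])"
    using bs_eq_context[OF bs_sym[OF a_pow_snoc_a], where x = "a_pow M" and y = "[]"] by simp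
  also have "bs_eq p \<dots> (a_pow (M + N) @ [letter_a])"
    using bs_eq_context[OF step1(2), where x = "[]" and y = "[letter_a]"] by simp
  also have "bs_eq p \<dots> (a_pow (M + N + 1))"
    by (rule a_pow_snoc_a)
  finally show ?case by (simp add: add.assoc)
next
  case (step2 N)
  have "bs_eq p (a_pow M @ a_pow (N - 1)) (a_pow M @ a_pow N @ [letter_a_inv])"
    using bs_eq_context[OF bs_sym[OF a_pow_snoc_a_inv], where x = "a_pow M" and y = "[]"] by simp
  also have "bs_eq p \<dots> (a_pow (M + N) @ [letter_a_inv])"
    using bs_eq_context[OF step2(2), where x = "[]" and y = "[letter_a_inv]"] by simp
  also have "bs_eq p \<dots> (a_pow (M + N - 1))"
    by (rule a_pow_snoc_a_inv)
  finally show ?case by (simp add: algebra_simps)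
qed

lemma a_pow_add_context: "bs_eq p (x @ a_pow M @ a_pow N @ y) (x @ a_pow (M + N) @ y)"
  using bs_eq_context[OF a_pow_add] by simp

lemma bs_commute_inverse:
  assumes "bs_eq p (u @ v) (v @ u)" "bs_eq p (u' @ u) []" "bs_eq p (u @ u') []"
  shows "bs_eq p (u' @ v) (v @ u')"
proof -
  have "bs_eq p (u' @ v) (u' @ v @ u @ u')"
    using bs_eq_context[OF bs_sym[OF assms(3)], where x = "u' @ v" and y = "[]"] by simp
  also have "bs_eq p \<dots> (u' @ u @ v @ u')"
    using bs_eq_context[OF bs_sym[OF assms(1)], where x = u' and y = u'] by simp
  also have "bs_eq p \<dots> (v @ u')"
    using bs_eq_context[OF assms(2), where x = "[]" and y = "v @ u'"] by simp
  finally show ?thesis .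
qed

lemma a_pow_p_commute_t_pos: "bs_eq p (a_pow (int p) @ [(GT, False)]) ([(GT, False)] @ a_pow (int p))"
proof -
  let ?P = "a_pow (int p)" and ?M = "a_pow (- int p)"
  have "bs_eq p ([(GT, False)] @ ?P) ([(GT, False)] @ ?P @ [(GT, True), (GT, False)])"
    using bs_sym[OF bs_free[of p "[(GT, False)] @ ?P" "(GT, True)" "[]"]] by simp
  also have "bs_eq p \<dots> (([(GT, False)] @ ?P @ [(GT, True)] @ ?M) @ ?P @ [(GT, False)])"
    using bs_sym[OF a_pow_add_context[of p "[(GT, False)] @ ?P @ [(GT, True)]" "- int p" "int p"]]
    by (simp add: a_pow_def)
  also have "bs_eq p \<dots> (?P @ [(GT, False)])"
    using bs_rel[of p "[]" "?P @ [(GT, False)]"] by (simp add: relator_def)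
  finally show ?thesis by (rule bs_sym)
qed

lemma a_pow_p_commute_t: "bs_eq p (a_pow (int p) @ [(GT, e)]) ([(GT, e)] @ a_pow (int p))"
proof (cases e)
  case True
  have "bs_eq p ([(GT, True)] @ a_pow (int p)) (a_pow (int p) @ [(GT, True)])"
    by (rule bs_commute_inverse[OF bs_sym[OF a_pow_p_commute_t_pos]])
      (use bs_free[of p "[]" "(GT, False)" "[]"] bs_free[of p "[]" "(GT, True)" "[]"] in simp_all)
  then show ?thesis using True by (simp add: bs_sym)
qed (use a_pow_p_commute_t_pos in simp)

lemma a_pow_multiple_commute_t: "bs_eq p (a_pow (q * int p) @ [(GT, e)]) ([(GT, e)] @ a_pow (q * int p))"
proof -
  have inverse: "bs_eq p (a_pow (- int p) @ a_pow (int p)) []" "bs_eq p (a_pow (int p) @ a_pow (- int p)) []"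
    using a_pow_add[of p "- int p" "int p"] a_pow_add[of p "int p" "- int p"] by (simp_all add: a_pow_def)
  have minus: "bs_eq p (a_pow (- int p) @ [(GT, e)]) ([(GT, e)] @ a_pow (- int p))"
    by (rule bs_commute_inverse[OF a_pow_p_commute_t inverse])
  show ?thesis
  proof (induction q rule: int_induct[where k = 0])
    case base
    then show ?case by (simp add: a_pow_def bs_refl)
  next
    case (step1 q)
    let ?Q = "a_pow (q * int p)" and ?P = "a_pow (int p)"
    have "bs_eq p (a_pow ((q + 1) * int p) @ [(GT, e)]) (?Q @ ?P @ [(GT, e)])"
      using bs_sym[OF a_pow_add_context[of p "[]" "q * int p" "int p" "[(GT, e)]"]]
      by (simp add: algebra_simps)
    also have "bs_eq p \<dots> (?Q @ [(GT, e)] @ ?P)"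
      using bs_eq_context[OF a_pow_p_commute_t, where x = ?Q and y = "[]"] by simp
    also have "bs_eq p \<dots> ([(GT, e)] @ ?Q @ ?P)"
      using bs_eq_context[OF step1(2), where x = "[]" and y = ?P] by simp
    also have "bs_eq p \<dots> ([(GT, e)] @ a_pow ((q + 1) * int p))"
      using a_pow_add_context[of p "[(GT, e)]" "q * int p" "int p" "[]"] by (simp add: algebra_simps)
    finally show ?case .
  next
    case (step2 q)
    let ?Q = "a_pow (q * int p)" and ?M = "a_pow (- int p)"
    have "bs_eq p (a_pow ((q - 1) * int p) @ [(GT, e)]) (?Q @ ?M @ [(GT, e)])"
      using bs_sym[OF a_pow_add_context[of p "[]" "q * int p" "- int p" "[(GT, e)]"]]
      by (simp add: algebra_simps)
    also have "bs_eq p \<dots> (?Q @ [(GT, e)] @ ?M)"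
      using bs_eq_context[OF minus, where x = ?Q and y = "[]"] by simp
    also have "bs_eq p \<dots> ([(GT, e)] @ ?Q @ ?M)"
      using bs_eq_context[OF step2(2), where x = "[]" and y = ?M] by simp
    also have "bs_eq p \<dots> ([(GT, e)] @ a_pow ((q - 1) * int p))"
      using a_pow_add_context[of p "[(GT, e)]" "q * int p" "- int p" "[]"] by (simp add: algebra_simps)
    finally show ?case .
  qed
qed

type_synonym nf_state = "(nat \<times> bool) list \<times> int"

definition state_word :: "nf_state \<Rightarrow> letter list" where
  "state_word S = block_word (fst S) @ a_pow (snd S)"

fun nf_step :: "nat \<Rightarrow> nf_state \<Rightarrow> letter \<Rightarrow> nf_state" where
  "nf_step p (w, N) (GA, b) = (w, if b then N - 1 else N + 1)"
| "nf_step p (w, N) (GT, e) =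
    (if N mod int p = 0 \<and> w \<noteq> [] \<and> snd (last w) = (\<not> e)
     then (butlast w, int (fst (last w)) + N)
     else (w @ [(nat (N mod int p), e)], N div int p * int p))"

definition normal_form :: "nat \<Rightarrow> letter list \<Rightarrow> nf_state" where
  "normal_form p x = foldl (nf_step p) ([], 0) x"

lemma block_word_Nil [simp]: "block_word [] = []"
  by (simp add: block_word_def)

lemma block_word_Cons [simp]: "block_word ((i, s) # w) = replicate i letter_a @ (GT, s) # block_word w"
  by (simp add: block_word_def)

lemma block_word_append [simp]: "block_word (w @ u) = block_word w @ block_word u"
  by (simp add: block_word_def)

lemma nf_step_cancel: "N mod int p = 0 \<Longrightarrow> nf_step p (w @ [(j, \<not> e)], N) (GT, e) = (w, int j + N)"
  by simp

lemma nf_step_push: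
  "\<not> (N mod int p = 0 \<and> w \<noteq> [] \<and> snd (last w) = (\<not> e)) \<Longrightarrow>
    nf_step p (w, N) (GT, e) = (w @ [(nat (N mod int p), e)], N div int p * int p)"
  by auto

lemma last_blockE:
  assumes "w \<noteq> []" "snd (last w) = e"
  obtains w' j where "w = w' @ [(j, e)]"
  using assms by (cases w rule: rev_cases) (auto intro: that[of _ "fst (last w)"])

lemma state_word_nf_step:
  assumes "p \<ge> 1"
  shows "bs_eq p (state_word S @ [l]) (state_word (nf_step p S l))"
proof -
  obtain w N where S: "S = (w, N)" by (cases S)
  obtain g b where l: "l = (g, b)" by (cases l)
  show ?thesis
  proof (cases g)
    case GA
    then show ?thesis
      using bs_eq_context[OF a_pow_snoc_a, where x = "block_word w" and y = "[]"]
        bs_eq_context[OF a_pow_snoc_a_inv, where x = "block_word w" and y = "[]"]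
      by (cases b) (simp_all add: S l state_word_def)
  next
    case GT
    define r where "r = N mod int p"
    define Q where "Q = N div int p * int p"
    have N: "N = r + Q" and "r \<ge> 0" and Q: "Q mod int p = 0" "Q div int p * int p = Q"
      using assms by (simp_all add: r_def Q_def)
    have commute: "bs_eq p (x @ (a_pow Q @ [(GT, b)]) @ []) (x @ ([(GT, b)] @ a_pow Q) @ [])" for x
      unfolding Q_def by (rule bs_eq_context[OF a_pow_multiple_commute_t])
    show ?thesis
    proof (cases "r = 0 \<and> w \<noteq> [] \<and> snd (last w) = (\<not> b)")
      case True
      obtain w' j where w: "w = w' @ [(j, \<not> b)]"
        by (rule last_blockE[of w "\<not> b"]) (use True in auto)
      have "N = Q"
        using N True by simp
      define X where "X = block_word w' @ replicate j letter_a"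
      have "state_word S @ [l] = (X @ [(GT, \<not> b)]) @ (a_pow Q @ [(GT, b)]) @ []"
        by (simp add: S l GT w \<open>N = Q\<close> X_def state_word_def)
      also have "bs_eq p \<dots> ((X @ [(GT, \<not> b)]) @ ([(GT, b)] @ a_pow Q) @ [])"
        by (rule commute)
      also have "bs_eq p \<dots> (X @ a_pow Q)"
        using bs_free[of p X "(GT, \<not> b)" "a_pow Q"] by simp
      also have "X @ a_pow Q = block_word w' @ a_pow (int j) @ a_pow Q @ []"
        by (simp add: X_def a_pow_of_nat)
      also have "bs_eq p \<dots> (block_word w' @ a_pow (int j + Q) @ [])"
        by (rule a_pow_add_context)
      also have "\<dots> = state_word (nf_step p S l)"
        using True by (simp add: S l GT w \<open>N = Q\<close> Q state_word_def)
      finally show ?thesis .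
    next
      case False
      have "state_word S @ [l] = block_word w @ a_pow (r + Q) @ [(GT, b)]"
        by (simp add: S l GT N state_word_def)
      also have "bs_eq p \<dots> (block_word w @ a_pow r @ a_pow Q @ [(GT, b)])"
        by (rule bs_sym[OF a_pow_add_context])
      also have "\<dots> = (block_word w @ a_pow r) @ (a_pow Q @ [(GT, b)]) @ []"
        by simp
      also have "bs_eq p \<dots> ((block_word w @ a_pow r) @ ([(GT, b)] @ a_pow Q) @ [])"
        by (rule commute)
      also have "\<dots> = state_word (w @ [(nat r, b)], Q)"
        using \<open>r \<ge> 0\<close> a_pow_of_nat[of "nat r"] by (simp add: state_word_def)
      also have "(w @ [(nat r, b)], Q) = nf_step p S l"
        using False by (auto simp: S l GT r_def Q_def)
      finally show ?thesis .
    qed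
  qed
qed

lemma bs_eq_state_word_normal_form:
  assumes "p \<ge> 1"
  shows "bs_eq p x (state_word (normal_form p x))"
proof (induction x rule: rev_induct)
  case Nil
  then show ?case by (simp add: normal_form_def state_word_def a_pow_def bs_refl)
next
  case (snoc l x)
  have "bs_eq p (x @ [l]) (state_word (normal_form p x) @ [l])"
    using bs_eq_context[OF snoc, where x = "[]" and y = "[l]"] by simp
  also have "bs_eq p \<dots> (state_word (normal_form p (x @ [l])))"
    using state_word_nf_step[OF assms] by (simp add: normal_form_def)
  finally show ?case .
qed

lemma freely_reduced_iff_successively:
  "freely_reduced xs \<longleftrightarrow> successively (\<lambda>x y. y \<noteq> inv_letter x) xs"
  by (simp add: freely_reduced_def successively_conv_nth)

lemma block_word_eq_Nil_iff [simp]: "block_word w = [] \<longleftrightarrow> w = []"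
  by (cases w) auto

lemma last_block_word: "w \<noteq> [] \<Longrightarrow> last (block_word w) = (GT, snd (last w))"
  by (induction w rule: rev_induct) auto

lemma hd_block: "hd (replicate i letter_a @ [(GT, s)]) = (if i = 0 then (GT, s) else letter_a)"
  by (cases i) auto

lemma successively_replicate_a: "successively (\<lambda>x y. y \<noteq> inv_letter x) (replicate i letter_a)"
  by (induction i) (auto simp: successively_Cons)

lemma normal_word_Nil [simp]: "normal_word p []"
  by (simp add: normal_word_def freely_reduced_def)

lemma normal_word_snoc:
  "normal_word p (w @ [(i, s)]) \<longleftrightarrow>
     normal_word p w \<and> i < p \<and> (w \<noteq> [] \<longrightarrow> \<not> (i = 0 \<and> s = (\<not> snd (last w))))"
proof -
  have "freely_reduced (block_word (w @ [(i, s)])) \<longleftrightarrow>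
      freely_reduced (block_word w) \<and> (w \<noteq> [] \<longrightarrow> \<not> (i = 0 \<and> s = (\<not> snd (last w))))"
    by (auto simp: freely_reduced_iff_successively successively_append_iff successively_replicate_a
        last_block_word hd_block)
  then show ?thesis
    by (auto simp: normal_word_def)
qed

lemma normal_word_appendD: "normal_word p (w @ u) \<Longrightarrow> normal_word p w"
  by (auto simp: normal_word_def freely_reduced_iff_successively successively_append_iff)

lemma normal_word_nf_step:
  assumes "p \<ge> 1" "normal_word p (fst S)"
  shows "normal_word p (fst (nf_step p S l))"
proof -
  obtain w N where S: "S = (w, N)" by (cases S)
  obtain g b where l: "l = (g, b)" by (cases l)
  show ?thesis
  proof (cases g)
    case GA
    then show ?thesis using assms(2) by (simp add: S l)
  next
    case GT
    show ?thesis
    proof (cases "N mod int p = 0 \<and> w \<noteq> [] \<and> snd (last w) = (\<not> b)")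
      case True
      obtain w' j where w: "w = w' @ [(j, \<not> b)]"
        by (rule last_blockE[of w "\<not> b"]) (use True in auto)
      show ?thesis
        using True assms(2) normal_word_appendD[of p w'] by (simp add: S l GT w)
    next
      case False
      have "0 \<le> N mod int p" "N mod int p < int p"
        using assms(1) by simp_all
      then have "nat (N mod int p) < p" "nat (N mod int p) = 0 \<longleftrightarrow> N mod int p = 0"
        by arith+
      then have "normal_word p (w @ [(nat (N mod int p), b)])"
        using False assms(2) by (auto simp: S normal_word_snoc)
      then show ?thesis
        by (simp only: S l GT nf_step_push[OF False] fst_conv)
    qed
  qed
qed

lemma normal_word_foldl_nf_step:
  "p \<ge> 1 \<Longrightarrow> normal_word p (fst S) \<Longrightarrow> normal_word p (fst (foldl (nf_step p) S u))"
  by (induction u arbitrary: S) (simp_all add: normal_word_nf_step)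

lemma normal_word_normal_form: "p \<ge> 1 \<Longrightarrow> normal_word p (fst (normal_form p x))"
  by (simp add: normal_form_def normal_word_foldl_nf_step)

lemma nf_step_push_block:
  assumes "p \<ge> 1" "normal_word p (w @ [(j, e)])"
  shows "nf_step p (w, int j + q * int p) (GT, e) = (w @ [(j, e)], q * int p)"
proof -
  have "j < p" and reduced: "w \<noteq> [] \<longrightarrow> \<not> (j = 0 \<and> e = (\<not> snd (last w)))"
    using assms(2) by (simp_all add: normal_word_snoc)
  then have mod: "(int j + q * int p) mod int p = int j" and div: "(int j + q * int p) div int p = q"
    by simp_all
  have "\<not> (int j = 0 \<and> w \<noteq> [] \<and> snd (last w) = (\<not> e))"
    using reduced by auto
  then have "\<not> ((int j + q * int p) mod int p = 0 \<and> w \<noteq> [] \<and> snd (last w) = (\<not> e))"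
    unfolding mod .
  then have "nf_step p (w, int j + q * int p) (GT, e) =
      (w @ [(nat ((int j + q * int p) mod int p), e)], (int j + q * int p) div int p * int p)"
    by (rule nf_step_push)
  then show ?thesis
    by (simp only: mod div nat_int)
qed

lemma nf_step_inv_letter:
  assumes "p \<ge> 1" "normal_word p (fst S)"
  shows "nf_step p (nf_step p S l) (inv_letter l) = S"
proof -
  obtain w N where S: "S = (w, N)" by (cases S)
  obtain g b where l: "l = (g, b)" by (cases l)
  show ?thesis
  proof (cases g)
    case GA
    then show ?thesis by (cases b) (simp_all add: S l)
  next
    case GT
    define q where "q = N div int p"
    show ?thesis
    proof (cases "N mod int p = 0 \<and> w \<noteq> [] \<and> snd (last w) = (\<not> b)")
      case True
      obtain w' j where w: "w = w' @ [(j, \<not> b)]"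
        by (rule last_blockE[of w "\<not> b"]) (use True in auto)
      have "N = q * int p"
        using True div_mult_mod_eq[of N "int p"] by (simp add: q_def)
      then have "nf_step p (w', int j + N) (GT, \<not> b) = (w, N)"
        using nf_step_push_block[OF assms(1), of w' j "\<not> b" q] assms(2) by (simp add: S w)
      then show ?thesis
        using True by (simp add: S l GT w nf_step_cancel)
    next
      case False
      have "0 \<le> N mod int p" "(N div int p * int p) mod int p = 0"
        using assms(1) by simp_all
      then have "nf_step p (w @ [(nat (N mod int p), b)], N div int p * int p) (GT, \<not> b) = (w, N)"
        using nf_step_cancel[of "N div int p * int p" p w "nat (N mod int p)" "\<not> b"] by simp
      then show ?thesis
        by (simp only: S l GT nf_step_push[OF False] inv_letter_Pair)
    qed
  qed
qed

lemma foldl_nf_step_replicate_a: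
  "foldl (nf_step p) (w, N) (replicate n letter_a) = (w, N + int n)"
  by (induction n arbitrary: N) (simp_all add: algebra_simps)

lemma foldl_nf_step_replicate_a_inv:
  "foldl (nf_step p) (w, N) (replicate n letter_a_inv) = (w, N - int n)"
  by (induction n arbitrary: N) (simp_all add: algebra_simps)

lemma foldl_nf_step_relator:
  assumes "p \<ge> 1" "normal_word p (fst S)"
  shows "foldl (nf_step p) S (relator p) = S"
proof -
  obtain w N where S: "S = (w, N)" by (cases S)
  have relator: "relator p = [(GT, False)] @ replicate p letter_a @ [(GT, True)] @ replicate p letter_a_inv"
    by (simp add: relator_def a_pow_of_nat a_pow_uminus_of_nat)
  define q where "q = N div int p"
  show ?thesis
  proof (cases "N mod int p = 0 \<and> w \<noteq> [] \<and> snd (last w) = (\<not> False)")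
    case True
    obtain w' j where w: "w = w' @ [(j, True)]"
      by (rule last_blockE[of w True]) (use True in auto)
    have "N = q * int p"
      using True div_mult_mod_eq[of N "int p"] by (simp add: q_def)
    then have sums: "int j + N + int p = int j + (q + 1) * int p" "N + int p = (q + 1) * int p"
      by (simp_all add: algebra_simps)
    have "normal_word p (w' @ [(j, True)])"
      using assms(2) by (simp add: S w)
    then have t_inv: "nf_step p (w', int j + N + int p) (GT, True) = (w, N + int p)"
      using nf_step_push_block[OF assms(1), of w' j True "q + 1"] by (simp only: sums w)
    have t: "nf_step p (w, N) (GT, False) = (w', int j + N)"
      using True nf_step_cancel[of N p w' j False] by (simp only: w) simp
    show ?thesis
      unfolding relator S foldl_append foldl_Cons foldl_Nil t foldl_nf_step_replicate_a t_inv
        foldl_nf_step_replicate_a_inv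
      by simp
  next
    case False
    define r where "r = nat (N mod int p)"
    have N: "N = int r + q * int p"
      using assms(1) by (simp add: r_def q_def)
    have t: "nf_step p (w, N) (GT, False) = (w @ [(r, False)], q * int p)"
      unfolding r_def q_def by (rule nf_step_push[OF False])
    have "(q * int p + int p) mod int p = 0"
      by simp
    then have t_inv: "nf_step p (w @ [(r, False)], q * int p + int p) (GT, True) = (w, int r + (q * int p + int p))"
      using nf_step_cancel[of "q * int p + int p" p w r True] by simp
    show ?thesis
      unfolding relator S foldl_append foldl_Cons foldl_Nil t foldl_nf_step_replicate_a t_inv
        foldl_nf_step_replicate_a_inv
      by (simp add: N)
  qed
qed

lemma foldl_nf_step_bs_eq:
  assumes "bs_eq p u v" "p \<ge> 1" "normal_word p (fst S)"
  shows "foldl (nf_step p) S u = foldl (nf_step p) S v"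
  using assms
proof (induction arbitrary: S rule: bs_eq.induct)
  case (bs_free u c v)
  then have "normal_word p (fst (foldl (nf_step p) S u))"
    by (simp add: normal_word_foldl_nf_step)
  with bs_free.prems(1) show ?case
    by (simp add: nf_step_inv_letter)
next
  case (bs_rel u v)
  then have "normal_word p (fst (foldl (nf_step p) S u))"
    by (simp add: normal_word_foldl_nf_step)
  with bs_rel.prems(1) show ?case
    by (simp add: foldl_nf_step_relator)
qed auto

lemma normal_form_bs_eq: "p \<ge> 1 \<Longrightarrow> bs_eq p u v \<Longrightarrow> normal_form p u = normal_form p v"
  unfolding normal_form_def by (rule foldl_nf_step_bs_eq) simp_all

lemma foldl_nf_step_block_word:
  assumes "p \<ge> 1" "normal_word p (u @ w)"
  shows "foldl (nf_step p) (u, 0) (block_word w) = (u @ w, 0)"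
  using assms(2)
proof (induction w arbitrary: u)
  case (Cons b w)
  obtain i s where b: "b = (i, s)" by (cases b)
  have "normal_word p (u @ [(i, s)])"
    using Cons.prems normal_word_appendD[of p "u @ [(i, s)]" w] by (simp add: b)
  then have "nf_step p (u, int i + 0 * int p) (GT, s) = (u @ [(i, s)], 0 * int p)"
    by (rule nf_step_push_block[OF assms(1)])
  then have "foldl (nf_step p) (u, 0) (block_word (b # w)) = foldl (nf_step p) (u @ [(i, s)], 0) (block_word w)"
    by (simp add: b foldl_nf_step_replicate_a)
  also have "\<dots> = (u @ b # w, 0)"
    using Cons.IH[of "u @ [(i, s)]"] Cons.prems by (simp add: b)
  finally show ?case .
qed simp

lemma normal_form_state_word:
  assumes "p \<ge> 1" "normal_word p w"
  shows "normal_form p (state_word (w, N)) = (w, N)"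
proof -
  have "foldl (nf_step p) ([], 0) (block_word w) = (w, 0)"
    using foldl_nf_step_block_word[OF assms(1), of "[]" w] assms(2) by simp
  then show ?thesis
    by (cases "N \<ge> 0") (simp_all add: normal_form_def state_word_def a_pow_def
        foldl_nf_step_replicate_a foldl_nf_step_replicate_a_inv)
qed

lemma normal_form_iff:
  assumes "p \<ge> 1"
  shows "normal_form p x = (w, N) \<longleftrightarrow> normal_word p w \<and> bs_eq p x (block_word w @ a_pow N)"
proof
  assume "normal_form p x = (w, N)"
  then show "normal_word p w \<and> bs_eq p x (block_word w @ a_pow N)"
    using normal_word_normal_form[OF assms, of x] bs_eq_state_word_normal_form[OF assms, of x]
    by (simp add: state_word_def)
next
  assume normal: "normal_word p w \<and> bs_eq p x (block_word w @ a_pow N)"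
  then have "normal_form p x = normal_form p (state_word (w, N))"
    using normal_form_bs_eq[OF assms] by (simp add: state_word_def)
  also have "\<dots> = (w, N)"
    using normal_form_state_word[OF assms] normal by blast
  finally show "normal_form p x = (w, N)" .
qed

definition state_size :: "nf_state \<Rightarrow> int" where
  "state_size S = int (length (block_word (fst S))) + \<bar>snd S\<bar>"

lemma state_size_nf_step:
  assumes "p \<ge> 1"
  shows "state_size (nf_step p S l) \<le> state_size S + 2 * int p"
proof -
  obtain w N where S: "S = (w, N)" by (cases S)
  obtain g b where l: "l = (g, b)" by (cases l)
  show ?thesis
  proof (cases g)
    case GA
    then show ?thesis
      using assms by (cases b) (auto simp: S l state_size_def)
  next
    case GT
    show ?thesis
    proof (cases "N mod int p = 0 \<and> w \<noteq> [] \<and> snd (last w) = (\<not> b)")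
      case True
      obtain w' j where w: "w = w' @ [(j, \<not> b)]"
        by (rule last_blockE[of w "\<not> b"]) (use True in auto)
      show ?thesis
        using True assms by (simp add: S l GT w nf_step_cancel state_size_def)
    next
      case False
      define r where "r = N mod int p"
      have step: "nf_step p S l = (w @ [(nat r, b)], N - r)"
        unfolding S l GT r_def minus_mod_eq_div_mult by (rule nf_step_push[OF False])
      have "0 \<le> r" "r < int p"
        using assms by (simp_all add: r_def)
      then show ?thesis
        unfolding step by (simp add: S state_size_def)
    qed
  qed
qed

lemma state_size_normal_form: "p \<ge> 1 \<Longrightarrow> state_size (normal_form p x) \<le> 2 * int p * int (length x)"
proof (induction x rule: rev_induct)
  case (snoc l x)
  then show ?case
    using state_size_nf_step[OF snoc.prems, of "normal_form p x" l]
    by (simp add: normal_form_def algebra_simps)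
qed (simp add: normal_form_def state_size_def)

lemma word_length_le: "bs_eq p x v \<Longrightarrow> word_length p x \<le> length v"
  unfolding word_length_def by (rule Least_le) blast

lemma word_length_attained: "\<exists>v. length v = word_length p x \<and> bs_eq p x v"
  unfolding word_length_def by (rule LeastI_ex) (blast intro: bs_refl)

lemma length_normal_form_le_word_length:
  assumes "p \<ge> 1" "normal_form p x = (w, N)"
  shows "real (length (block_word w)) + real_of_int \<bar>N\<bar> \<le> 2 * real p * real (word_length p x)"
proof -
  obtain v where v: "length v = word_length p x" "bs_eq p x v"
    using word_length_attained by blast
  have "normal_form p v = (w, N)"
    using normal_form_bs_eq[OF assms(1) v(2)] assms(2) by simp
  then have "int (length (block_word w)) + \<bar>N\<bar> \<le> 2 * int p * int (word_length p x)"
    using state_size_normal_form[OF assms(1), of v] v(1) by (simp add: state_size_def)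
  then have "real_of_int (int (length (block_word w)) + \<bar>N\<bar>) \<le> real_of_int (2 * int p * int (word_length p x))"
    by (simp only: of_int_le_iff)
  then show ?thesis
    by simp
qed

theorem lemma3p3:
  fixes p :: nat
  assumes "p \<ge> 1"
  shows "(\<forall>x :: letter list. \<exists>!(w, N). normal_word p w \<and> bs_eq p x (block_word w @ a_pow N))
    \<and> (\<exists>C1 :: real. C1 > 0 \<and>
        (\<forall>x w N. normal_word p w \<and> bs_eq p x (block_word w @ a_pow N) \<longrightarrow>
           C1 * (real (length (block_word w)) + real_of_int \<bar>N\<bar>) \<le> real (word_length p x)
         \<and> real (word_length p x) \<le> real (length (block_word w)) + real_of_int \<bar>N\<bar>))"
proof (intro conjI allI exI[of _ "1 / (2 * real p)"] impI)
  have normal_form: "(case S of (w, N) \<Rightarrow> normal_word p w \<and> bs_eq p x (block_word w @ a_pow N))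
      \<longleftrightarrow> normal_form p x = S" for x S
    using normal_form_iff[OF assms] by (cases S) simp
  show "\<exists>!(w, N). normal_word p w \<and> bs_eq p x (block_word w @ a_pow N)" for x
    unfolding normal_form by simp
  show "0 < 1 / (2 * real p)"
    using assms by simp
  fix x w N
  assume normal: "normal_word p w \<and> bs_eq p x (block_word w @ a_pow N)"
  then have "normal_form p x = (w, N)"
    using normal_form_iff[OF assms] by blast
  then have "real (length (block_word w)) + real_of_int \<bar>N\<bar> \<le> 2 * real p * real (word_length p x)"
    by (rule length_normal_form_le_word_length[OF assms])
  then show "1 / (2 * real p) * (real (length (block_word w)) + real_of_int \<bar>N\<bar>) \<le> real (word_length p x)"
    using assms by (simp add: field_simps)
  show "real (word_length p x) \<le> real (length (block_word w)) + real_of_int \<bar>N\<bar>"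
    using word_length_le[of p x "block_word w @ a_pow N"] normal by simp
qed

end
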